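(* Let $1\le r\le s\le t$ and let $u=ABCd$, $v=A'B'C'd'$ be distinct vertices of $E3C(r,s,t)$ with $B=B'$, $C=C'$ and $d=d'$ (any $d\in\{0,1,2\}$). Then there exist $2r+2$ pairwise internally disjoint $u$–$v$ paths in $E3C(r,s,t)$, each of length at most $r+6$.
   Context: The exchanged 3-ary $n$-cube $E3C(r,s,t)$ ($r,s,t\ge1$, $n=r+s+t+1$): vertices are strings written $x=ABCd$ with $A\in\{0,1,2\}^r$, $B\in\{0,1,2\}^s$, $C\in\{0,1,2\}^t$, $d\in\{0,1,2\}$. Two distinct vertices $x=ABCd$, $y=A'B'C'd'$ are adjacent iff one of: (E0) $A=A',B=B',C=C'$ and $d\ne d'$; (E1) $d=d'=0$, $A=A'$, $B=B'$ and $C,C'$ differ in exactly one position; (E2) $d=d'=1$, $A=A'$, $C=C'$ and $B,B'$ differ in exactly one position; (E3) $d=d'=2$, $B=B'$, $C=C'$ and $A,A'$ differ in exactly one position. Paths are internally disjoint if they share no vertices other than their endpoints; length = number of edges. *)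

theory Defs
  imports Main
begin

type_synonym e3c_vertex = "nat list \<times> nat list \<times> nat list \<times> nat"

definition ternary :: "nat \<Rightarrow> nat list \<Rightarrow> bool" where
  "ternary k X \<longleftrightarrow> length X = k \<and> (\<forall>a\<in>set X. a < 3)"

definition e3c_vertices :: "nat \<Rightarrow> nat \<Rightarrow> nat \<Rightarrow> e3c_vertex set" where
  "e3c_vertices r s t = {(A,B,C,d). ternary r A \<and> ternary s B \<and> ternary t C \<and> d < 3}"

definition differ_one :: "nat list \<Rightarrow> nat list \<Rightarrow> bool" where
  "differ_one X Y \<longleftrightarrow> length X = length Y \<and> card {i. i < length X \<and> X ! i \<noteq> Y ! i} = 1"

definition e3c_adj :: "nat \<Rightarrow> nat \<Rightarrow> nat \<Rightarrow> e3c_vertex \<Rightarrow> e3c_vertex \<Rightarrow> bool" where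
  "e3c_adj r s t x y \<longleftrightarrow> x \<in> e3c_vertices r s t \<and> y \<in> e3c_vertices r s t \<and> x \<noteq> y \<and>
     (case x of (A,B,C,d) \<Rightarrow> case y of (A',B',C',d') \<Rightarrow>
        (A = A' \<and> B = B' \<and> C = C' \<and> d \<noteq> d')
      \<or> (d = 0 \<and> d' = 0 \<and> A = A' \<and> B = B' \<and> differ_one C C')
      \<or> (d = 1 \<and> d' = 1 \<and> A = A' \<and> C = C' \<and> differ_one B B')
      \<or> (d = 2 \<and> d' = 2 \<and> B = B' \<and> C = C' \<and> differ_one A A'))"

definition e3c_path :: "nat \<Rightarrow> nat \<Rightarrow> nat \<Rightarrow> e3c_vertex \<Rightarrow> e3c_vertex \<Rightarrow> e3c_vertex list \<Rightarrow> bool" where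
  "e3c_path r s t u v p \<longleftrightarrow> p \<noteq> [] \<and> hd p = u \<and> last p = v \<and> distinct p \<and>
     set p \<subseteq> e3c_vertices r s t \<and>
     (\<forall>i. Suc i < length p \<longrightarrow> e3c_adj r s t (p ! i) (p ! Suc i))"

definition path_len :: "'a list \<Rightarrow> nat" where
  "path_len p = length p - 1"

end

theory Submission
  imports Defs
begin

text \<open>Write u = (A, \<sigma>) and v = (A', \<sigma>) with \<sigma> = (B, C, d). The vertices with a fixed
  (B, C)-part in layer d = 2 form a copy of the ternary r-cube, and this cube is 2r-connected:
  if A and A' differ in h positions, h paths flip these positions in the h cyclic orders, and
  for each of the remaining 2r - h pairs (j, x) with x different from A ! j and A' ! j one path
  first sets coordinate j to x. Every u-v path below has the same shape: a walk in the
  (B, C, d)-coordinates from \<sigma> to some state in layer 2 (with A-part A), a crossing of the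
  cube at that state from A to A', and the reversed walk with A-part A'. Paths whose walks use
  disjoint sets of states after \<sigma> are internally disjoint.

  For d = 2 the 2r cube paths use the trivial walk, and two more paths detour through layers 0
  and 1 into a neighbouring cube. For d = 0 the walks go straight up to layer 2, or first move to
  one of the 2r neighbours of C in its first r coordinates (r \<le> t), or detour through layer 1;
  the case d = 1 is symmetric with the roles of B and C exchanged (r \<le> s).\<close>

lemma differ_one_sym: "differ_one X Y \<Longrightarrow> differ_one Y X"
proof -
  assume "differ_one X Y"
  then have len: "length Y = length X" and card: "card {i. i < length X \<and> X ! i \<noteq> Y ! i} = 1"
    unfolding differ_one_def by auto
  have "{i. i < length Y \<and> Y ! i \<noteq> X ! i} = {i. i < length X \<and> X ! i \<noteq> Y ! i}"
    using len by auto
  then show ?thesis using len card unfolding differ_one_def by simp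
qed

lemma differ_one_neq: "differ_one X Y \<Longrightarrow> X \<noteq> Y"
  unfolding differ_one_def by auto

lemma differ_one_if_differ_only_at:
  assumes "length Y = length X" "p < length X" "X ! p \<noteq> Y ! p"
    and "\<And>i. i < length X \<Longrightarrow> i \<noteq> p \<Longrightarrow> X ! i = Y ! i"
  shows "differ_one X Y"
proof -
  have "{i. i < length X \<and> X ! i \<noteq> Y ! i} = {p}" using assms by auto
  then show ?thesis using assms(1) unfolding differ_one_def by simp
qed

lemma differ_one_list_update: "j < length X \<Longrightarrow> x \<noteq> X ! j \<Longrightarrow> differ_one X (X[j := x])"
  by (rule differ_one_if_differ_only_at) auto

lemma ternary_list_update: "ternary k X \<Longrightarrow> x < 3 \<Longrightarrow> ternary k (X[j := x])"
  unfolding ternary_def by (auto dest: set_update_subset_insert[THEN subsetD])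

lemma list_update_eq_list_update_iff:
  assumes "j < length X" "j' < length X" "x \<noteq> X ! j"
  shows "X[j := x] = X[j' := x'] \<longleftrightarrow> j = j' \<and> x = x'"
  using assms by (metis nth_list_update_eq nth_list_update_neq)

section \<open>Cyclic arcs\<close>

lemma mod_add_left_inj:
  fixes k l m h :: nat
  assumes "l < h" "m < h" "(k + l) mod h = (k + m) mod h"
  shows "l = m"
proof -
  have "(int k + int l) mod int h = (int k + int m) mod int h"
    using assms(3) by (metis of_nat_add of_nat_mod)
  then have "(int k + int l + - int k) mod int h = (int k + int m + - int k) mod int h"
    by (rule mod_add_cong) simp
  then show ?thesis using assms(1,2) by simp
qed

definition cyclic_arc :: "nat \<Rightarrow> nat \<Rightarrow> nat \<Rightarrow> nat set" where
  "cyclic_arc h k m = (\<lambda>l. (k + l) mod h) ` {..<m}"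

lemma cyclic_arc_0 [simp]: "cyclic_arc h k 0 = {}"
  unfolding cyclic_arc_def by simp

lemma cyclic_arc_Suc: "cyclic_arc h k (Suc m) = insert ((k + m) mod h) (cyclic_arc h k m)"
  unfolding cyclic_arc_def by (simp add: lessThan_Suc)

lemma mod_add_notin_cyclic_arc: "m < h \<Longrightarrow> (k + m) mod h \<notin> cyclic_arc h k m"
proof
  assume "m < h" "(k + m) mod h \<in> cyclic_arc h k m"
  then obtain l where "l < m" "(k + l) mod h = (k + m) mod h"
    unfolding cyclic_arc_def by auto
  then show False using mod_add_left_inj[of l h m k] \<open>m < h\<close> by simp
qed

lemma finite_cyclic_arc: "finite (cyclic_arc h k m)"
  unfolding cyclic_arc_def by simp

lemma card_cyclic_arc: "m \<le> h \<Longrightarrow> card (cyclic_arc h k m) = m"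
proof (induction m)
  case (Suc m)
  then show ?case
    by (simp add: cyclic_arc_Suc mod_add_notin_cyclic_arc finite_cyclic_arc)
qed simp

lemma cyclic_arc_subset: "m \<le> h \<Longrightarrow> cyclic_arc h k m \<subseteq> {..<h}"
  unfolding cyclic_arc_def by auto

lemma cyclic_arc_full: "cyclic_arc h k h = {..<h}"
  by (rule card_subset_eq) (simp_all add: card_cyclic_arc cyclic_arc_subset)

text \<open>A proper nonempty arc determines its starting point: it is the only element of the arc
  whose cyclic predecessor lies outside the arc.\<close>
lemma cyclic_arc_start_unique:
  assumes "k < h" "k' < h" "0 < m" "m < h" "0 < m'" "m' < h"
    and arcs_eq: "cyclic_arc h k m = cyclic_arc h k' m'"
  shows "k = k'"
proof -
  have pred_notin: "(k + (h - 1)) mod h \<notin> cyclic_arc h k m" if "m < h" for k m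
  proof
    assume "(k + (h - 1)) mod h \<in> cyclic_arc h k m"
    then obtain l where "l < m" "(k + l) mod h = (k + (h - 1)) mod h"
      unfolding cyclic_arc_def by auto
    then show False using mod_add_left_inj[of l h "h - 1" k] that by simp
  qed
  have "k' \<in> cyclic_arc h k' m'"
    unfolding cyclic_arc_def using assms(2,5) by (auto intro: image_eqI[of _ _ 0])
  then have "k' \<in> cyclic_arc h k m" using arcs_eq by simp
  then obtain l where l: "l < m" "k' = (k + l) mod h"
    unfolding cyclic_arc_def by auto
  show "k = k'"
  proof (cases l)
    case 0
    then show ?thesis using l assms(1) by simp
  next
    case (Suc l')
    have "(k' + (h - 1)) mod h = (k + l + (h - 1)) mod h"
      using l(2) by (simp add: mod_add_left_eq)
    also have "k + l + (h - 1) = k + l' + 1 * h"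
      using Suc assms(1) by simp
    also have "(k + l' + 1 * h) mod h = (k + l') mod h"
      by (rule mod_mult_self1)
    finally have "(k' + (h - 1)) mod h \<in> cyclic_arc h k m"
      unfolding cyclic_arc_def using l(1) Suc by auto
    then show ?thesis using pred_notin[of m' k'] assms(6) arcs_eq by simp
  qed
qed

section \<open>Hamming walks\<close>

definition diff_positions :: "'a list \<Rightarrow> 'a list \<Rightarrow> nat list" where
  "diff_positions X Y = filter (\<lambda>i. X ! i \<noteq> Y ! i) [0..<length X]"

definition hamming_dist :: "'a list \<Rightarrow> 'a list \<Rightarrow> nat" where
  "hamming_dist X Y = length (diff_positions X Y)"

lemma distinct_diff_positions: "distinct (diff_positions X Y)"
  unfolding diff_positions_def by simp

lemma set_diff_positions: "set (diff_positions X Y) = {i. i < length X \<and> X ! i \<noteq> Y ! i}"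
  unfolding diff_positions_def by auto

lemma hamming_dist_eq_card: "hamming_dist X Y = card {i. i < length X \<and> X ! i \<noteq> Y ! i}"
  unfolding hamming_dist_def
  using distinct_card[OF distinct_diff_positions] set_diff_positions by metis

lemma hamming_dist_le_length: "hamming_dist X Y \<le> length X"
  unfolding hamming_dist_def diff_positions_def
  by (metis diff_zero length_filter_le length_upt)

definition mix :: "'a list \<Rightarrow> 'a list \<Rightarrow> nat set \<Rightarrow> 'a list" where
  "mix X Y S = map (\<lambda>i. if i \<in> S then Y ! i else X ! i) [0..<length X]"

lemma length_mix [simp]: "length (mix X Y S) = length X"
  unfolding mix_def by simp

lemma nth_mix [simp]: "i < length X \<Longrightarrow> mix X Y S ! i = (if i \<in> S then Y ! i else X ! i)"
  unfolding mix_def by simp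

lemma mix_empty: "mix X Y {} = X"
  by (rule nth_equalityI) simp_all

lemma mix_diff_positions: "length Y = length X \<Longrightarrow> mix X Y (set (diff_positions X Y)) = Y"
  by (rule nth_equalityI) (auto simp: set_diff_positions)

lemma mix_eq_mix_iff:
  assumes "S \<subseteq> set (diff_positions X Y)" "S' \<subseteq> set (diff_positions X Y)"
  shows "mix X Y S = mix X Y S' \<longleftrightarrow> S = S'"
proof
  assume eq: "mix X Y S = mix X Y S'"
  have "i \<in> S \<longleftrightarrow> i \<in> S'" if "i \<in> set (diff_positions X Y)" for i
    using arg_cong[OF eq, of "\<lambda>Z. Z ! i"] that by (auto simp: set_diff_positions split: if_splits)
  then show "S = S'" using assms by blast
qed simp

lemma ternary_mix: "ternary n X \<Longrightarrow> ternary n Y \<Longrightarrow> ternary n (mix X Y S)"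
  unfolding ternary_def mix_def by auto

lemma differ_one_mix_insert:
  assumes "length Y = length X" "p \<in> set (diff_positions X Y)" "p \<notin> S"
  shows "differ_one (mix X Y S) (mix X Y (insert p S))"
  by (rule differ_one_if_differ_only_at) (use assms in \<open>auto simp: set_diff_positions\<close>)

text \<open>The point after m steps of the walk from X to Y that switches the differing positions
  to their values in Y one at a time, in cyclic order starting from the k-th one.\<close>
definition walk_point :: "'a list \<Rightarrow> 'a list \<Rightarrow> nat \<Rightarrow> nat \<Rightarrow> 'a list" where
  "walk_point X Y k m = mix X Y (nth (diff_positions X Y) ` cyclic_arc (hamming_dist X Y) k m)"

lemma inj_on_nth_diff_positions: "inj_on (nth (diff_positions X Y)) {..<hamming_dist X Y}"
  unfolding hamming_dist_def by (rule inj_on_nth) (simp_all add: distinct_diff_positions)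

lemma image_nth_cyclic_arc_subset:
  "m \<le> hamming_dist X Y \<Longrightarrow>
    nth (diff_positions X Y) ` cyclic_arc (hamming_dist X Y) k m \<subseteq> set (diff_positions X Y)"
  using cyclic_arc_subset[of m "hamming_dist X Y" k] unfolding hamming_dist_def
  by (auto intro!: nth_mem)

lemma walk_point_0: "walk_point X Y k 0 = X"
  unfolding walk_point_def by (simp add: mix_empty)

lemma walk_point_hamming_dist: "length Y = length X \<Longrightarrow> walk_point X Y k (hamming_dist X Y) = Y"
  unfolding walk_point_def cyclic_arc_full hamming_dist_def
  by (simp add: lessThan_atLeast0 nth_image mix_diff_positions)

lemma differ_one_walk_point_Suc:
  assumes "length Y = length X" "m < hamming_dist X Y"
  shows "differ_one (walk_point X Y k m) (walk_point X Y k (Suc m))"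
proof -
  let ?h = "hamming_dist X Y" and ?ds = "diff_positions X Y"
  have "(k + m) mod ?h < ?h" using assms(2) by simp
  then have p_mem: "?ds ! ((k + m) mod ?h) \<in> set ?ds" unfolding hamming_dist_def by simp
  have "?ds ! ((k + m) mod ?h) \<notin> nth ?ds ` cyclic_arc ?h k m"
    using mod_add_notin_cyclic_arc[OF assms(2)] inj_on_image_mem_iff[OF inj_on_nth_diff_positions
        \<open>(k + m) mod ?h < ?h\<close>[folded lessThan_iff] cyclic_arc_subset[of m ?h k]] assms(2)
    by simp
  then show ?thesis
    unfolding walk_point_def cyclic_arc_Suc image_insert
    by (rule differ_one_mix_insert[OF assms(1) p_mem])
qed

lemma walk_point_eq_walk_point:
  assumes "m \<le> hamming_dist X Y" "m' \<le> hamming_dist X Y"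
    and eq: "walk_point X Y k m = walk_point X Y k' m'"
  shows "m = m'"
    and "k < hamming_dist X Y \<Longrightarrow> k' < hamming_dist X Y \<Longrightarrow> 0 < m \<Longrightarrow> m < hamming_dist X Y
          \<Longrightarrow> k = k'"
proof -
  let ?h = "hamming_dist X Y" and ?ds = "diff_positions X Y"
  have "nth ?ds ` cyclic_arc ?h k m = nth ?ds ` cyclic_arc ?h k' m'"
    using eq image_nth_cyclic_arc_subset[OF assms(1)] image_nth_cyclic_arc_subset[OF assms(2)]
    unfolding walk_point_def by (simp add: mix_eq_mix_iff)
  then have arcs_eq: "cyclic_arc ?h k m = cyclic_arc ?h k' m'"
    using inj_on_image_eq_iff[OF inj_on_nth_diff_positions
        cyclic_arc_subset[OF assms(1)] cyclic_arc_subset[OF assms(2)]] by simp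
  then show "m = m'"
    using card_cyclic_arc[OF assms(1), of k] card_cyclic_arc[OF assms(2), of k'] by simp
  show "k = k'" if "k < ?h" "k' < ?h" "0 < m" "m < ?h"
    using cyclic_arc_start_unique[OF that _ _ arcs_eq] \<open>m = m'\<close> that by simp
qed

lemma nth_walk_point_cases:
  "i < length X \<Longrightarrow> walk_point X Y k m ! i = X ! i \<or> walk_point X Y k m ! i = Y ! i"
  unfolding walk_point_def by simp

lemma ternary_walk_point: "ternary n X \<Longrightarrow> ternary n Y \<Longrightarrow> ternary n (walk_point X Y k m)"
  unfolding walk_point_def by (rule ternary_mix)

definition hamming_walk :: "'a list \<Rightarrow> 'a list \<Rightarrow> nat \<Rightarrow> 'a list list" where
  "hamming_walk X Y k = map (walk_point X Y k) [0..<Suc (hamming_dist X Y)]"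

definition hamming_path :: "nat \<Rightarrow> nat list \<Rightarrow> nat list \<Rightarrow> nat list list \<Rightarrow> bool" where
  "hamming_path n X Y Xs \<longleftrightarrow> Xs \<noteq> [] \<and> hd Xs = X \<and> last Xs = Y \<and> distinct Xs \<and>
     (\<forall>Z\<in>set Xs. ternary n Z) \<and> successively differ_one Xs"

lemma length_hamming_walk: "length (hamming_walk X Y k) = Suc (hamming_dist X Y)"
  unfolding hamming_walk_def by simp

lemma nth_mem_hamming_walk_cases:
  assumes "Z \<in> set (hamming_walk X Y k)" "i < length X"
  shows "Z ! i = X ! i \<or> Z ! i = Y ! i"
proof -
  obtain m where "Z = walk_point X Y k m"
    using assms(1) unfolding hamming_walk_def by auto
  then show ?thesis using nth_walk_point_cases[OF assms(2)] by blast
qed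

lemma hamming_path_hamming_walk:
  assumes "ternary n X" "ternary n Y"
  shows "hamming_path n X Y (hamming_walk X Y k)"
proof -
  have len: "length Y = length X" using assms unfolding ternary_def by simp
  have "inj_on (walk_point X Y k) {0..<Suc (hamming_dist X Y)}"
  proof (rule inj_onI)
    fix m m' assume "m \<in> {0..<Suc (hamming_dist X Y)}" "m' \<in> {0..<Suc (hamming_dist X Y)}"
      and "walk_point X Y k m = walk_point X Y k m'"
    then show "m = m'" using walk_point_eq_walk_point(1)[of m X Y m' k k] by simp
  qed
  moreover have "successively differ_one (hamming_walk X Y k)"
    unfolding hamming_walk_def successively_conv_nth
    using differ_one_walk_point_Suc[OF len] by (simp del: upt_Suc)
  ultimately show ?thesis
    using assms len ternary_walk_point
    unfolding hamming_path_def hamming_walk_def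
    by (auto simp: distinct_map walk_point_0 walk_point_hamming_dist hd_map last_map
        simp del: upt_Suc)
qed

lemma hamming_walks_inter:
  assumes "length Y = length X" "k < hamming_dist X Y" "k' < hamming_dist X Y" "k \<noteq> k'"
  shows "set (hamming_walk X Y k) \<inter> set (hamming_walk X Y k') \<subseteq> {X, Y}"
proof
  fix Z assume Z: "Z \<in> set (hamming_walk X Y k) \<inter> set (hamming_walk X Y k')"
  obtain m m' where m: "m \<le> hamming_dist X Y" "m' \<le> hamming_dist X Y"
    and walk_points: "Z = walk_point X Y k m" "Z = walk_point X Y k' m'"
    using Z unfolding hamming_walk_def by (auto simp: less_Suc_eq_le simp del: upt_Suc)
  have "walk_point X Y k m = walk_point X Y k' m'" using walk_points by simp
  then have "\<not> (0 < m \<and> m < hamming_dist X Y)"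
    using walk_point_eq_walk_point(2)[OF m] assms(2-4) by blast
  then have "m = 0 \<or> m = hamming_dist X Y" using m(1) by linarith
  then show "Z \<in> {X, Y}" using walk_points walk_point_0 walk_point_hamming_dist[OF assms(1)] by auto
qed

section \<open>Disjoint paths in the ternary cube\<close>

lemma card_avoiding_pairs:
  assumes "\<forall>j<n. X ! j < 3 \<and> Y ! j < (3::nat)"
  shows "card (SIGMA j:{..<n}. {x. x < 3 \<and> x \<noteq> X ! j \<and> x \<noteq> Y ! j})
           + card {j. j < n \<and> X ! j \<noteq> Y ! j} = 2 * n"
proof -
  have fibre: "card {x. x < 3 \<and> x \<noteq> X ! j \<and> x \<noteq> Y ! j} + (if X ! j \<noteq> Y ! j then 1 else 0) = 2"
    if "j < n" for j
  proof -
    have "{x. x < 3 \<and> x \<noteq> X ! j \<and> x \<noteq> Y ! j} = {0, 1, 2} - {X ! j, Y ! j}" by auto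
    moreover have "card ({0::nat, 1, 2} - {X ! j, Y ! j}) = 3 - card {X ! j, Y ! j}"
      using assms that by (subst card_Diff_subset) auto
    ultimately show ?thesis by simp
  qed
  have "card (SIGMA j:{..<n}. {x. x < 3 \<and> x \<noteq> X ! j \<and> x \<noteq> Y ! j})
      = (\<Sum>j<n. card {x. x < 3 \<and> x \<noteq> X ! j \<and> x \<noteq> Y ! j})"
    by (rule card_SigmaI) auto
  moreover have "card {j. j < n \<and> X ! j \<noteq> Y ! j} = (\<Sum>j<n. if X ! j \<noteq> Y ! j then 1 else 0)"
    using sum.inter_filter[of "{..<n}" "\<lambda>_. 1::nat" "\<lambda>j. X ! j \<noteq> Y ! j"]
    by (simp add: lessThan_def)
  ultimately show ?thesis using fibre by (simp add: sum.distrib[symmetric])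
qed

definition single_changes :: "nat \<Rightarrow> nat list \<Rightarrow> nat list set" where
  "single_changes n X = (\<lambda>(j, x). X[j := x]) ` (SIGMA j:{..<n}. {x. x < 3 \<and> x \<noteq> X ! j})"

lemma card_single_changes:
  assumes "ternary m X" "n \<le> m"
  shows "card (single_changes n X) = 2 * n"
proof -
  have "inj_on (\<lambda>(j, x). X[j := x]) (SIGMA j:{..<n}. {x. x < 3 \<and> x \<noteq> X ! j})"
    using assms unfolding ternary_def by (auto intro!: inj_onI simp: list_update_eq_list_update_iff)
  moreover have "card (SIGMA j:{..<n}. {x. x < 3 \<and> x \<noteq> X ! j}) = 2 * n"
    using card_avoiding_pairs[of n X X] assms unfolding ternary_def by simp
  ultimately show ?thesis unfolding single_changes_def by (simp add: card_image)
qed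

lemma mem_single_changesD:
  assumes "Y \<in> single_changes n X" "ternary m X" "n \<le> m"
  shows "ternary m Y" "differ_one X Y"
proof -
  obtain j x where jx: "j < n" "x < 3" "x \<noteq> X ! j" "Y = X[j := x]"
    using assms(1) unfolding single_changes_def by auto
  then show "ternary m Y" using ternary_list_update[OF assms(2)] by simp
  have "j < length X" using jx(1) assms(2,3) unfolding ternary_def by simp
  then show "differ_one X Y" using differ_one_list_update jx(3,4) by simp
qed

lemma ex_differ_one:
  assumes "ternary m X" "0 < m"
  obtains Y where "ternary m Y" "differ_one X Y"
proof -
  have "single_changes m X \<noteq> {}"
    using card_single_changes[OF assms(1) order_refl] assms(2) by auto
  then obtain Y where "Y \<in> single_changes m X" by blast
  then show thesis using that mem_single_changesD[OF _ assms(1) order_refl] by blast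
qed

definition hamming_detour :: "nat list \<Rightarrow> nat list \<Rightarrow> nat \<Rightarrow> nat \<Rightarrow> nat list list" where
  "hamming_detour X Y j x = X # hamming_walk (X[j := x]) (Y[j := x]) 0 @ [Y]"

lemma nth_mem_hamming_detour:
  assumes "Z \<in> set (hamming_detour X Y j x)" "Z \<notin> {X, Y}" "j < length X" "length Y = length X"
  shows "Z ! j = x" and "\<And>i. i < length X \<Longrightarrow> i \<noteq> j \<Longrightarrow> Z ! i = X ! i \<or> Z ! i = Y ! i"
proof -
  have Z: "Z \<in> set (hamming_walk (X[j := x]) (Y[j := x]) 0)"
    using assms(1,2) unfolding hamming_detour_def by auto
  show "Z ! j = x"
    using nth_mem_hamming_walk_cases[OF Z, of j] assms(3,4) by auto
  show "Z ! i = X ! i \<or> Z ! i = Y ! i" if "i < length X" "i \<noteq> j" for i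
    using nth_mem_hamming_walk_cases[OF Z, of i] that by auto
qed

lemma hamming_path_hamming_detour:
  assumes "ternary n X" "ternary n Y" "X \<noteq> Y" "j < n" "x < 3" "x \<noteq> X ! j" "x \<noteq> Y ! j"
  shows "hamming_path n X Y (hamming_detour X Y j x)"
proof -
  let ?W = "hamming_walk (X[j := x]) (Y[j := x]) 0"
  have len: "length X = n" "length Y = n" using assms(1,2) unfolding ternary_def by auto
  have W: "hamming_path n (X[j := x]) (Y[j := x]) ?W"
    using assms by (intro hamming_path_hamming_walk ternary_list_update)
  have "V \<notin> set ?W" if "V ! j \<noteq> x" for V
    using nth_mem_hamming_walk_cases[of V "X[j := x]" "Y[j := x]" 0 j] that assms(4) len by auto
  then have notin: "X \<notin> set ?W" "Y \<notin> set ?W" using assms(6,7) by auto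
  have "differ_one X (X[j := x])" "differ_one (Y[j := x]) Y"
    using assms(4,6,7) len differ_one_list_update[of j X x]
      differ_one_sym[OF differ_one_list_update[of j Y x]] by auto
  then show ?thesis
    using W notin assms(1-3) unfolding hamming_path_def hamming_detour_def
    by (auto simp: successively_append_iff successively_Cons)
qed

lemma length_hamming_detour: "length X = n \<Longrightarrow> length (hamming_detour X Y j x) \<le> n + 3"
  unfolding hamming_detour_def using hamming_dist_le_length[of "X[j := x]" "Y[j := x]"]
  by (simp add: length_hamming_walk)

lemma hamming_detour_eq_iff:
  assumes "j < length X" "j' < length X" "x \<noteq> X ! j"
  shows "hamming_detour X Y j x = hamming_detour X Y j' x' \<longleftrightarrow> j = j' \<and> x = x'"
proof
  have second: "hamming_detour X Y j x ! 1 = X[j := x]" for j x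
    unfolding hamming_detour_def hamming_walk_def by (simp add: nth_append walk_point_0 del: upt_Suc)
  assume "hamming_detour X Y j x = hamming_detour X Y j' x'"
  then have "X[j := x] = X[j' := x']" using second by metis
  then show "j = j' \<and> x = x'" using assms by (simp add: list_update_eq_list_update_iff)
qed simp

lemma hamming_detour_neq_hamming_walk:
  assumes "j < length X" "x \<noteq> X ! j" "x \<noteq> Y ! j"
  shows "hamming_detour X Y j x \<noteq> hamming_walk X Y k"
proof
  have "X[j := x] \<in> set (hamming_detour X Y j x)"
    unfolding hamming_detour_def hamming_walk_def by (force simp: walk_point_0 simp del: upt_Suc)
  moreover have "X[j := x] \<notin> set (hamming_walk X Y k)"
    using nth_mem_hamming_walk_cases[of "X[j := x]" X Y k j] assms by auto
  ultimately show "hamming_detour X Y j x = hamming_walk X Y k \<Longrightarrow> False" by simp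
qed

lemma hamming_walk_inter_hamming_detour:
  assumes "length Y = length X" "j < length X" "x \<noteq> X ! j" "x \<noteq> Y ! j"
  shows "set (hamming_walk X Y k) \<inter> set (hamming_detour X Y j x) \<subseteq> {X, Y}"
proof
  fix Z assume "Z \<in> set (hamming_walk X Y k) \<inter> set (hamming_detour X Y j x)"
  then show "Z \<in> {X, Y}"
    using nth_mem_hamming_walk_cases[of Z X Y k j] nth_mem_hamming_detour(1)[of Z X Y j x] assms
    by auto
qed

lemma hamming_detours_inter:
  assumes "length Y = length X" "j < length X" "j' < length X"
    and "x \<notin> {X ! j, Y ! j}" "x' \<notin> {X ! j', Y ! j'}" "(j, x) \<noteq> (j', x')"
  shows "set (hamming_detour X Y j x) \<inter> set (hamming_detour X Y j' x') \<subseteq> {X, Y}"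
proof
  fix Z assume Z: "Z \<in> set (hamming_detour X Y j x) \<inter> set (hamming_detour X Y j' x')"
  show "Z \<in> {X, Y}"
  proof (rule ccontr)
    assume inner: "Z \<notin> {X, Y}"
    then have "Z ! j = x" "Z ! j' = x'"
      using Z nth_mem_hamming_detour(1) assms(1-3) by auto
    moreover have "Z ! j = X ! j \<or> Z ! j = Y ! j" if "j \<noteq> j'"
      using Z inner nth_mem_hamming_detour(2)[of Z X Y j' x' j] assms(1-3) that by auto
    ultimately show False using assms(4-6) by auto
  qed
qed

lemma card_hamming_walks: "card (hamming_walk X Y ` {..<hamming_dist X Y}) = hamming_dist X Y"
proof -
  let ?h = "hamming_dist X Y"
  have "k = k'" if "k < ?h" "k' < ?h" "hamming_walk X Y k = hamming_walk X Y k'" for k k'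
  proof (cases "1 < ?h")
    case True
    have "walk_point X Y k 1 = walk_point X Y k' 1"
      using arg_cong[OF that(3), of "\<lambda>Zs. Zs ! 1"] True unfolding hamming_walk_def
      by (simp del: upt_Suc)
    then show ?thesis using walk_point_eq_walk_point(2)[of 1 X Y 1 k k'] True that(1,2) by simp
  qed (use that in simp)
  then show ?thesis by (simp add: card_image inj_on_def)
qed

theorem ternary_cube_disjoint_paths:
  assumes X: "ternary n X" and Y: "ternary n Y" and "X \<noteq> Y"
  shows "\<exists>\<P>. finite \<P> \<and> card \<P> = 2 * n \<and>
           (\<forall>Zs\<in>\<P>. hamming_path n X Y Zs \<and> length Zs \<le> n + 3) \<and>
           (\<forall>Zs\<in>\<P>. \<forall>Zs'\<in>\<P>. Zs \<noteq> Zs' \<longrightarrow> set Zs \<inter> set Zs' \<subseteq> {X, Y})"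
proof -
  let ?h = "hamming_dist X Y"
  define J where "J = (SIGMA j:{..<n}. {x. x < 3 \<and> x \<noteq> X ! j \<and> x \<noteq> Y ! j})"
  define walks where "walks = hamming_walk X Y ` {..<?h}"
  define detours where "detours = (\<lambda>(j, x). hamming_detour X Y j x) ` J"
  have len: "length X = n" "length Y = n" using X Y unfolding ternary_def by auto
  have "inj_on (\<lambda>(j, x). hamming_detour X Y j x) J"
    unfolding J_def using len by (auto intro!: inj_onI simp: hamming_detour_eq_iff)
  then have "card detours = card J" unfolding detours_def by (simp add: card_image)
  moreover have "walks \<inter> detours = {}"
  proof -
    have "hamming_walk X Y k \<noteq> hamming_detour X Y j x" if "(j, x) \<in> J" for k j x
      using hamming_detour_neq_hamming_walk[of j X x Y k] that len unfolding J_def by auto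
    then show ?thesis unfolding walks_def detours_def by auto
  qed
  moreover have "card J + ?h = 2 * n"
    using card_avoiding_pairs[of n X Y] X Y len unfolding J_def hamming_dist_eq_card ternary_def
    by simp
  ultimately have "card (walks \<union> detours) = 2 * n"
    using card_hamming_walks[of X Y] by (simp add: card_Un_disjoint walks_def detours_def J_def)
  moreover have "hamming_path n X Y Zs \<and> length Zs \<le> n + 3" if "Zs \<in> walks \<union> detours" for Zs
    using that hamming_path_hamming_walk[OF X Y] hamming_path_hamming_detour[OF X Y \<open>X \<noteq> Y\<close>]
      hamming_dist_le_length[of X Y] length_hamming_detour[OF len(1)]
    unfolding walks_def detours_def J_def by (auto simp: len length_hamming_walk)
  moreover have "set Zs \<inter> set Zs' \<subseteq> {X, Y}"
    if "Zs \<in> walks \<union> detours" "Zs' \<in> walks \<union> detours" "Zs \<noteq> Zs'" for Zs Zs'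
  proof -
    from that(1,2) consider
        (walks) k k' where "k < ?h" "k' < ?h" "Zs = hamming_walk X Y k" "Zs' = hamming_walk X Y k'"
      | (mixed) k j x where "(j, x) \<in> J" "{Zs, Zs'} = {hamming_walk X Y k, hamming_detour X Y j x}"
      | (detours) j x j' x' where "(j, x) \<in> J" "(j', x') \<in> J"
          "Zs = hamming_detour X Y j x" "Zs' = hamming_detour X Y j' x'"
      unfolding walks_def detours_def by (auto simp: insert_commute)
    then show ?thesis
    proof cases
      case walks
      then show ?thesis using hamming_walks_inter[of Y X k k'] that(3) len by auto
    next
      case mixed
      then show ?thesis using hamming_walk_inter_hamming_detour[of Y X j x k] len
        unfolding J_def by (auto simp: doubleton_eq_iff Int_commute)
    next
      case detours
      then show ?thesis using hamming_detours_inter[of Y X j j' x x'] that(3) len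
        unfolding J_def by auto
    qed
  qed
  moreover have "finite (walks \<union> detours)" unfolding walks_def detours_def J_def by simp
  ultimately show ?thesis by blast
qed

section \<open>Lifting cube paths to the exchanged ternary cube\<close>

lemma mem_e3c_vertices [simp]:
  "(X, B, C, d) \<in> e3c_vertices r s t \<longleftrightarrow> ternary r X \<and> ternary s B \<and> ternary t C \<and> d < 3"
  unfolding e3c_vertices_def by simp

lemma e3c_adj_iff:
  "e3c_adj r s t (X, B, C, d) (X', B', C', d') \<longleftrightarrow>
     (X, B, C, d) \<in> e3c_vertices r s t \<and> (X', B', C', d') \<in> e3c_vertices r s t \<and>
     (X, B, C, d) \<noteq> (X', B', C', d') \<and>
     ((X = X' \<and> B = B' \<and> C = C' \<and> d \<noteq> d')
      \<or> (d = 0 \<and> d' = 0 \<and> X = X' \<and> B = B' \<and> differ_one C C')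
      \<or> (d = 1 \<and> d' = 1 \<and> X = X' \<and> C = C' \<and> differ_one B B')
      \<or> (d = 2 \<and> d' = 2 \<and> B = B' \<and> C = C' \<and> differ_one X X'))"
  unfolding e3c_adj_def by simp

lemma e3c_adj_sym: "e3c_adj r s t x y \<Longrightarrow> e3c_adj r s t y x"
  unfolding e3c_adj_def by (auto split: prod.splits dest: differ_one_sym)

text \<open>An edge between two vertices with the same A-part never uses the A-coordinates, so it
  persists when that common A-part is replaced.\<close>
lemma e3c_adj_change_A:
  assumes "e3c_adj r s t (X, \<sigma>) (X, \<sigma>')" "ternary r X'"
  shows "e3c_adj r s t (X', \<sigma>) (X', \<sigma>')"
  using assms by (cases \<sigma>; cases \<sigma>') (auto simp: e3c_adj_iff)

lemma e3c_adj_layer2: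
  assumes "differ_one X X'" "ternary r X" "ternary r X'" "ternary s B" "ternary t C"
  shows "e3c_adj r s t (X, B, C, 2) (X', B, C, 2)"
  using assms differ_one_neq by (auto simp: e3c_adj_iff)

definition internally_disjoint_paths ::
    "nat \<Rightarrow> nat \<Rightarrow> nat \<Rightarrow> e3c_vertex \<Rightarrow> e3c_vertex \<Rightarrow> nat \<Rightarrow> e3c_vertex list set \<Rightarrow> bool" where
  "internally_disjoint_paths r s t u v L P \<longleftrightarrow> finite P \<and>
     (\<forall>p\<in>P. e3c_path r s t u v p \<and> path_len p \<le> L) \<and>
     (\<forall>p\<in>P. \<forall>q\<in>P. p \<noteq> q \<longrightarrow> set p \<inter> set q = {u, v})"

locale e3c_crossing =
  fixes r s t :: nat and A A' :: "nat list"
  assumes ternary_A: "ternary r A" and ternary_A': "ternary r A'" and A_neq_A': "A \<noteq> A'"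
begin

text \<open>The (B, C, d)-parts of a walk with constant A-part that ends in layer 2, the only layer
  in which the A-part can change.\<close>
definition approach_walk :: "(nat list \<times> nat list \<times> nat) list \<Rightarrow> bool" where
  "approach_walk w \<longleftrightarrow> w \<noteq> [] \<and> distinct w \<and> (\<forall>\<sigma>\<in>set w. (A, \<sigma>) \<in> e3c_vertices r s t) \<and>
     snd (snd (last w)) = 2 \<and> successively (e3c_adj r s t) (map (Pair A) w)"

definition lift_path :: "(nat list \<times> nat list \<times> nat) list \<Rightarrow> nat list list \<Rightarrow> e3c_vertex list" where
  "lift_path w Xs = map (Pair A) (butlast w) @ map (\<lambda>X. (X, last w)) Xs @ rev (map (Pair A') (butlast w))"

lemma set_lift_path:
  "set (lift_path w Xs) = Pair A ` set (butlast w) \<union> (\<lambda>X. (X, last w)) ` set Xs \<union> Pair A' ` set (butlast w)"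
  unfolding lift_path_def by auto

lemma length_lift_path: "length (lift_path w Xs) = 2 * (length w - 1) + length Xs"
  unfolding lift_path_def by simp

lemma vertex_change_A: "(A, \<sigma>) \<in> e3c_vertices r s t \<Longrightarrow> ternary r X \<Longrightarrow> (X, \<sigma>) \<in> e3c_vertices r s t"
  by (cases \<sigma>) simp

lemma successively_lift_path:
  assumes w: "approach_walk w" and Xs: "hamming_path r A A' Xs"
  shows "successively (e3c_adj r s t) (lift_path w Xs)"
proof -
  define w0 where "w0 = butlast w"
  obtain B C where last_w: "last w = (B, C, 2)"
    using w unfolding approach_walk_def by (metis prod.collapse)
  have w_eq: "w = w0 @ [(B, C, 2)]"
    using w last_w unfolding w0_def approach_walk_def by (metis append_butlast_last_id)
  have BC: "ternary s B" "ternary t C"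
    using w last_w unfolding approach_walk_def by (metis last_in_set mem_e3c_vertices)+
  have chain_A: "successively (e3c_adj r s t) (map (Pair A) w0)"
    and join_A: "w0 \<noteq> [] \<Longrightarrow> e3c_adj r s t (A, last w0) (A, B, C, 2)"
    using w unfolding approach_walk_def w_eq by (auto simp: successively_append_iff last_map)
  have chain_A': "successively (\<lambda>x y. e3c_adj r s t y x) (map (Pair A') w0)"
    using chain_A unfolding successively_map
    by (rule successively_mono) (auto intro: e3c_adj_sym e3c_adj_change_A ternary_A')
  have join_A': "w0 \<noteq> [] \<Longrightarrow> e3c_adj r s t (A', B, C, 2) (A', last w0)"
    using join_A by (auto intro: e3c_adj_sym e3c_adj_change_A ternary_A')
  have chain_Xs: "successively (e3c_adj r s t) (map (\<lambda>X. (X, B, C, 2)) Xs)"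
    using Xs BC unfolding hamming_path_def successively_map
    by (auto intro: successively_mono e3c_adj_layer2)
  have "Xs \<noteq> []" "hd Xs = A" "last Xs = A'" using Xs unfolding hamming_path_def by auto
  then show ?thesis
    using chain_A join_A chain_A' join_A' chain_Xs
    unfolding lift_path_def w0_def[symmetric] last_w
    by (cases "w0 = []") (auto simp: successively_append_iff hd_map last_map hd_rev last_rev)
qed

lemma e3c_path_lift_path:
  assumes w: "approach_walk w" and Xs: "hamming_path r A A' Xs"
  shows "e3c_path r s t (A, hd w) (A', hd w) (lift_path w Xs)"
proof -
  have "w \<noteq> []" using w unfolding approach_walk_def by simp
  then obtain w0 \<sigma> where w_eq: "w = w0 @ [\<sigma>]"
    by (cases w rule: rev_cases) auto
  then have "\<sigma> \<notin> set w0" "distinct w0"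
    using w unfolding approach_walk_def by auto
  have Xs_props: "Xs \<noteq> []" "hd Xs = A" "last Xs = A'" "distinct Xs" "\<forall>X\<in>set Xs. ternary r X"
    using Xs unfolding hamming_path_def by auto
  have valid: "(X, \<tau>) \<in> e3c_vertices r s t" if "\<tau> \<in> set w" "ternary r X" for \<tau> X
    using w that unfolding approach_walk_def by (auto intro: vertex_change_A)
  have "hd (lift_path w Xs) = (A, hd w) \<and> last (lift_path w Xs) = (A', hd w)"
    using Xs_props unfolding lift_path_def w_eq
    by (cases "w0 = []") (simp_all add: hd_map last_map hd_append last_append last_rev)
  moreover have "distinct (lift_path w Xs)"
    using Xs_props \<open>\<sigma> \<notin> set w0\<close> \<open>distinct w0\<close> A_neq_A'
    unfolding lift_path_def w_eq by (auto simp: distinct_map inj_on_def)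
  moreover have "set (lift_path w Xs) \<subseteq> e3c_vertices r s t"
  proof
    fix x assume "x \<in> set (lift_path w Xs)"
    then consider \<tau> where "\<tau> \<in> set w" "x = (A, \<tau>)" | X where "X \<in> set Xs" "x = (X, last w)"
      | \<tau> where "\<tau> \<in> set w" "x = (A', \<tau>)"
      unfolding set_lift_path by (auto dest: in_set_butlastD)
    then show "x \<in> e3c_vertices r s t"
      by cases (use valid Xs_props ternary_A ternary_A' \<open>w \<noteq> []\<close> in auto)
  qed
  ultimately show ?thesis
    using successively_lift_path[OF w Xs] Xs_props
    unfolding e3c_path_def successively_conv_nth[symmetric] by (auto simp: lift_path_def)
qed

lemma snd_mem_lift_path: "x \<in> set (lift_path w Xs) \<Longrightarrow> w \<noteq> [] \<Longrightarrow> snd x \<in> set w"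
  using last_in_set[of w] unfolding set_lift_path by (auto dest: in_set_butlastD)

lemma set_lift_path_inter:
  assumes w: "approach_walk w" and w': "approach_walk w'" and "hd w = hd w'"
    and tails: "set (tl w) \<inter> set (tl w') = {}"
    and crossings: "w = w' \<Longrightarrow> set Xs \<inter> set Xs' \<subseteq> {A, A'}"
  shows "set (lift_path w Xs) \<inter> set (lift_path w' Xs') \<subseteq> {(A, hd w), (A', hd w)}"
proof
  fix x assume x: "x \<in> set (lift_path w Xs) \<inter> set (lift_path w' Xs')"
  have ne: "w \<noteq> []" "w' \<noteq> []" and dist: "distinct w" "distinct w'"
    using w w' unfolding approach_walk_def by auto
  show "x \<in> {(A, hd w), (A', hd w)}"
  proof (cases "w = w'")
    case True
    then obtain \<sigma> where "w = [\<sigma>]" "w' = [\<sigma>]" using tails ne by (cases w) auto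
    then show ?thesis using x crossings True unfolding set_lift_path by auto
  next
    case False
    have on_start: "y \<in> {(A, hd v), (A', hd v)}"
      if "y \<in> set (lift_path v Ys)" "snd y = hd v" "tl v \<noteq> []" "distinct v" for y v Ys
    proof -
      have "last v \<noteq> hd v" using that(3,4) by (cases v) (auto dest: last_in_set)
      then show ?thesis using that(1,2) unfolding set_lift_path by auto
    qed
    obtain \<sigma> \<tau>s \<tau>s' where w_eq: "w = \<sigma> # \<tau>s" "w' = \<sigma> # \<tau>s'"
      using ne \<open>hd w = hd w'\<close> by (metis list.collapse)
    have "snd x = \<sigma>"
      using snd_mem_lift_path[of x w Xs] snd_mem_lift_path[of x w' Xs'] x tails unfolding w_eq by auto
    moreover have "\<tau>s \<noteq> [] \<or> \<tau>s' \<noteq> []" using False unfolding w_eq by auto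
    ultimately show ?thesis
      using on_start[of x w Xs] on_start[of x w' Xs'] x dist unfolding w_eq by auto
  qed
qed

text \<open>A lifted path without inner vertices is the edge (A, hd w) -- (A', hd w), which only
  arises from w = [hd w] and Xs = [A, A'].\<close>
lemma lift_path_eq_imp_eq:
  assumes w: "approach_walk w" "approach_walk w'" and Xs: "hamming_path r A A' Xs" "hamming_path r A A' Xs'"
    and "hd w = hd w'" and eq: "lift_path w Xs = lift_path w' Xs'"
    and inter: "set (lift_path w Xs) \<inter> set (lift_path w' Xs') \<subseteq> {(A, hd w), (A', hd w)}"
  shows "(w, Xs) = (w', Xs')"
proof -
  have edge: "v = [hd v] \<and> Ys = [A, A']"
    if "approach_walk v" "hamming_path r A A' Ys" "length (lift_path v Ys) \<le> 2" for v Ys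
  proof -
    have "Ys \<noteq> []" "hd Ys = A" "last Ys = A'" "v \<noteq> []"
      using that(1,2) unfolding approach_walk_def hamming_path_def by auto
    then have "length Ys \<ge> 2" using A_neq_A' by (cases Ys) (auto split: if_splits simp: Suc_le_eq)
    then have "length v - 1 = 0" "length Ys = 2"
      using that(3) unfolding length_lift_path by auto
    then show ?thesis using \<open>v \<noteq> []\<close> \<open>hd Ys = A\<close> \<open>last Ys = A'\<close>
      by (cases v) (auto simp: length_Suc_conv numeral_2_eq_2)
  qed
  have "set (lift_path w Xs) \<subseteq> {(A, hd w), (A', hd w)}" using inter eq by simp
  moreover have "distinct (lift_path w Xs)"
    using e3c_path_lift_path[OF w(1) Xs(1)] unfolding e3c_path_def by simp
  ultimately have "length (lift_path w Xs) \<le> 2"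
    using card_mono[of "{(A, hd w), (A', hd w)}" "set (lift_path w Xs)"]
    by (simp add: distinct_card card_insert_if split: if_splits)
  then show ?thesis using edge[OF w(1) Xs(1)] edge[OF w(2) Xs(2)] eq \<open>hd w = hd w'\<close> by metis
qed

lemma internally_disjoint_lift_paths:
  assumes "finite I"
    and walks: "\<And>w Xs. (w, Xs) \<in> I \<Longrightarrow>
      approach_walk w \<and> hd w = \<sigma> \<and> hamming_path r A A' Xs \<and> 2 * (length w - 1) + length Xs \<le> L + 1"
    and apart: "\<And>w Xs w' Xs'. (w, Xs) \<in> I \<Longrightarrow> (w', Xs') \<in> I \<Longrightarrow> (w, Xs) \<noteq> (w', Xs') \<Longrightarrow>
      set (tl w) \<inter> set (tl w') = {} \<and> (w = w' \<longrightarrow> set Xs \<inter> set Xs' \<subseteq> {A, A'})"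
  shows "\<exists>P. card P = card I \<and> internally_disjoint_paths r s t (A, \<sigma>) (A', \<sigma>) L P"
proof -
  let ?u = "(A, \<sigma>)" and ?v = "(A', \<sigma>)"
  have path: "e3c_path r s t ?u ?v (lift_path w Xs)" if "(w, Xs) \<in> I" for w Xs
    using walks[OF that] e3c_path_lift_path by blast
  have inter: "set (lift_path w Xs) \<inter> set (lift_path w' Xs') \<subseteq> {?u, ?v}"
    if "(w, Xs) \<in> I" "(w', Xs') \<in> I" "(w, Xs) \<noteq> (w', Xs')" for w Xs w' Xs'
    using set_lift_path_inter apart[OF that] walks[OF that(1)] walks[OF that(2)] by metis
  have "(w, Xs) = (w', Xs')"
    if "(w, Xs) \<in> I" "(w', Xs') \<in> I" "lift_path w Xs = lift_path w' Xs'" for w Xs w' Xs'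
  proof (rule ccontr)
    assume "(w, Xs) \<noteq> (w', Xs')"
    then show False
      using lift_path_eq_imp_eq[of w w' Xs Xs'] inter[OF that(1,2)] walks[OF that(1)] walks[OF that(2)]
        that(3) by auto
  qed
  then have "inj_on (\<lambda>(w, Xs). lift_path w Xs) I" by (auto simp: inj_on_def)
  show ?thesis
    unfolding internally_disjoint_paths_def
  proof (intro exI conjI ballI impI)
    show "card ((\<lambda>(w, Xs). lift_path w Xs) ` I) = card I" by (rule card_image) fact
    show "finite ((\<lambda>(w, Xs). lift_path w Xs) ` I)" using \<open>finite I\<close> by simp
  next
    fix p assume "p \<in> (\<lambda>(w, Xs). lift_path w Xs) ` I"
    then obtain w Xs where "(w, Xs) \<in> I" "p = lift_path w Xs" by auto
    then show "e3c_path r s t ?u ?v p" "path_len p \<le> L"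
      using path[of w Xs] walks[of w Xs] unfolding path_len_def by (auto simp: length_lift_path)
  next
    fix p q assume "p \<in> (\<lambda>(w, Xs). lift_path w Xs) ` I" "q \<in> (\<lambda>(w, Xs). lift_path w Xs) ` I" "p \<noteq> q"
    then obtain w Xs w' Xs' where "(w, Xs) \<in> I" "(w', Xs') \<in> I" "(w, Xs) \<noteq> (w', Xs')"
      "p = lift_path w Xs" "q = lift_path w' Xs'" by auto
    moreover have "?u \<in> set p" "?v \<in> set p" "?u \<in> set q" "?v \<in> set q"
      using calculation path unfolding e3c_path_def by (metis hd_in_set last_in_set)+
    ultimately show "set p \<inter> set q = {?u, ?v}" using inter by blast
  qed
qed

lemma hamming_walk_A_A':
  "hamming_path r A A' (hamming_walk A A' 0) \<and> length (hamming_walk A A' 0) \<le> r + 1"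
  using hamming_path_hamming_walk[OF ternary_A ternary_A'] hamming_dist_le_length[of A A'] ternary_A
  by (simp add: length_hamming_walk ternary_def)

lemma paths_from_approach_walks:
  assumes "finite Ws" "card Ws = 2 * r + 2"
    and walks: "\<And>w. w \<in> Ws \<Longrightarrow> approach_walk w \<and> hd w = \<sigma> \<and> length w \<le> 4"
    and apart: "\<And>w w'. w \<in> Ws \<Longrightarrow> w' \<in> Ws \<Longrightarrow> w \<noteq> w' \<Longrightarrow> set (tl w) \<inter> set (tl w') = {}"
  shows "\<exists>P. card P = 2 * r + 2 \<and> internally_disjoint_paths r s t (A, \<sigma>) (A', \<sigma>) (r + 6) P"
proof -
  let ?I = "Ws \<times> {hamming_walk A A' 0}"
  have "\<exists>P. card P = card ?I \<and> internally_disjoint_paths r s t (A, \<sigma>) (A', \<sigma>) (r + 6) P"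
    by (rule internally_disjoint_lift_paths)
      (use assms hamming_walk_A_A' in \<open>fastforce+\<close>)
  then show ?thesis using assms(2) by (simp add: card_cartesian_product)
qed

lemma paths_in_layer0:
  assumes B: "ternary s B" and C: "ternary t C" and "1 \<le> s" "r \<le> t"
  shows "\<exists>P. card P = 2 * r + 2 \<and> internally_disjoint_paths r s t (A, B, C, 0) (A', B, C, 0) (r + 6) P"
proof -
  obtain B' where B': "ternary s B'" "differ_one B B'" using ex_differ_one[OF B] \<open>1 \<le> s\<close> by auto
  define via_C where "via_C C' = [(B, C, 0::nat), (B, C', 0), (B, C', 2)]" for C'
  define Ws where "Ws = insert [(B, C, 0::nat), (B, C, 2)]
    (insert [(B, C, 0), (B, C, 1), (B', C, 1), (B', C, 2)] (via_C ` single_changes r C))"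
  have C': "ternary t C'" "differ_one C C'" if "C' \<in> single_changes r C" for C'
    using mem_single_changesD[OF that C \<open>r \<le> t\<close>] by auto
  have "finite (single_changes r C)" unfolding single_changes_def by simp
  then have "finite Ws" unfolding Ws_def by simp
  moreover have "card Ws = 2 * r + 2"
  proof -
    have "inj_on via_C (single_changes r C)" unfolding via_C_def by (rule inj_onI) simp
    then have "card (via_C ` single_changes r C) = 2 * r"
      using card_single_changes[OF C \<open>r \<le> t\<close>] by (simp add: card_image)
    then show ?thesis using \<open>finite Ws\<close> unfolding Ws_def via_C_def by (auto simp: card_insert_if)
  qed
  moreover have "approach_walk w \<and> hd w = (B, C, 0) \<and> length w \<le> 4" if "w \<in> Ws" for w
    using that B B' C C' differ_one_neq ternary_A
    unfolding Ws_def via_C_def approach_walk_def by (auto simp: e3c_adj_iff)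
  moreover have "set (tl w) \<inter> set (tl w') = {}" if "w \<in> Ws" "w' \<in> Ws" "w \<noteq> w'" for w w'
    using that differ_one_neq[OF B'(2)] C'(2)[THEN differ_one_neq]
    unfolding Ws_def via_C_def by auto
  ultimately show ?thesis by (rule paths_from_approach_walks)
qed

lemma paths_in_layer1:
  assumes B: "ternary s B" and C: "ternary t C" and "1 \<le> t" "r \<le> s"
  shows "\<exists>P. card P = 2 * r + 2 \<and> internally_disjoint_paths r s t (A, B, C, 1) (A', B, C, 1) (r + 6) P"
proof -
  obtain C' where C': "ternary t C'" "differ_one C C'" using ex_differ_one[OF C] \<open>1 \<le> t\<close> by auto
  define via_B where "via_B B' = [(B, C, 1::nat), (B', C, 1), (B', C, 2)]" for B'
  define Ws where "Ws = insert [(B, C, 1::nat), (B, C, 2)]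
    (insert [(B, C, 1), (B, C, 0), (B, C', 0), (B, C', 2)] (via_B ` single_changes r B))"
  have B': "ternary s B'" "differ_one B B'" if "B' \<in> single_changes r B" for B'
    using mem_single_changesD[OF that B \<open>r \<le> s\<close>] by auto
  have "finite (single_changes r B)" unfolding single_changes_def by simp
  then have "finite Ws" unfolding Ws_def by simp
  moreover have "card Ws = 2 * r + 2"
  proof -
    have "inj_on via_B (single_changes r B)" unfolding via_B_def by (rule inj_onI) simp
    then have "card (via_B ` single_changes r B) = 2 * r"
      using card_single_changes[OF B \<open>r \<le> s\<close>] by (simp add: card_image)
    then show ?thesis using \<open>finite Ws\<close> unfolding Ws_def via_B_def by (auto simp: card_insert_if)
  qed
  moreover have "approach_walk w \<and> hd w = (B, C, 1) \<and> length w \<le> 4" if "w \<in> Ws" for w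
    using that B B' C C' differ_one_neq ternary_A
    unfolding Ws_def via_B_def approach_walk_def by (auto simp: e3c_adj_iff)
  moreover have "set (tl w) \<inter> set (tl w') = {}" if "w \<in> Ws" "w' \<in> Ws" "w \<noteq> w'" for w w'
    using that differ_one_neq[OF C'(2)] B'(2)[THEN differ_one_neq]
    unfolding Ws_def via_B_def by auto
  ultimately show ?thesis by (rule paths_from_approach_walks)
qed

lemma paths_in_layer2:
  assumes B: "ternary s B" and C: "ternary t C" and "1 \<le> s" "1 \<le> t"
  shows "\<exists>P. card P = 2 * r + 2 \<and> internally_disjoint_paths r s t (A, B, C, 2) (A', B, C, 2) (r + 6) P"
proof -
  obtain \<P> where \<P>: "finite \<P>" "card \<P> = 2 * r"
    and \<P>_paths: "\<And>Xs. Xs \<in> \<P> \<Longrightarrow> hamming_path r A A' Xs \<and> length Xs \<le> r + 3"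
    and \<P>_apart: "\<And>Xs Xs'. Xs \<in> \<P> \<Longrightarrow> Xs' \<in> \<P> \<Longrightarrow> Xs \<noteq> Xs' \<Longrightarrow> set Xs \<inter> set Xs' \<subseteq> {A, A'}"
    using ternary_cube_disjoint_paths[OF ternary_A ternary_A' A_neq_A'] by metis
  obtain B' where B': "ternary s B'" "differ_one B B'" using ex_differ_one[OF B] \<open>1 \<le> s\<close> by auto
  obtain C' where C': "ternary t C'" "differ_one C C'" using ex_differ_one[OF C] \<open>1 \<le> t\<close> by auto
  define \<sigma> where "\<sigma> = (B, C, 2::nat)"
  define W where "W = hamming_walk A A' 0"
  define I where "I = Pair [\<sigma>] ` \<P> \<union>
    {([\<sigma>, (B, C, 1), (B', C, 1), (B', C, 2)], W), ([\<sigma>, (B, C, 0), (B, C', 0), (B, C', 2)], W)}"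
  have "\<exists>P. card P = card I \<and> internally_disjoint_paths r s t (A, \<sigma>) (A', \<sigma>) (r + 6) P"
  proof (rule internally_disjoint_lift_paths)
    show "finite I" unfolding I_def using \<P>(1) by simp
  next
    fix w Xs assume "(w, Xs) \<in> I"
    then show "approach_walk w \<and> hd w = \<sigma> \<and> hamming_path r A A' Xs \<and>
        2 * (length w - 1) + length Xs \<le> r + 6 + 1"
      using hamming_walk_A_A' B B' C C' differ_one_neq ternary_A
      unfolding I_def W_def \<sigma>_def approach_walk_def by (auto simp: e3c_adj_iff dest: \<P>_paths)
  next
    fix w Xs w' Xs' assume "(w, Xs) \<in> I" "(w', Xs') \<in> I" "(w, Xs) \<noteq> (w', Xs')"
    then show "set (tl w) \<inter> set (tl w') = {} \<and> (w = w' \<longrightarrow> set Xs \<inter> set Xs' \<subseteq> {A, A'})"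
      using \<P>_apart differ_one_neq[OF B'(2)] unfolding I_def \<sigma>_def by auto
  qed
  moreover have "card I = 2 * r + 2"
  proof -
    have "card (Pair [\<sigma>] ` \<P>) = 2 * r" using \<P> by (simp add: card_image inj_on_def)
    then show ?thesis using \<P>(1) unfolding I_def by (auto simp: card_insert_if)
  qed
  ultimately show ?thesis unfolding \<sigma>_def by simp
qed

end

theorem lemma10:
  fixes r s t :: nat and A A' B C :: "nat list" and d :: nat
  assumes "1 \<le> r" and "r \<le> s" and "s \<le> t"
    and "(A,B,C,d) \<in> e3c_vertices r s t" and "(A',B,C,d) \<in> e3c_vertices r s t"
    and "A \<noteq> A'"
  shows "\<exists>P. card P = 2*r + 2 \<and> finite P \<and>
           (\<forall>p\<in>P. e3c_path r s t (A,B,C,d) (A',B,C,d) p \<and> path_len p \<le> r + 6) \<and>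
           (\<forall>p\<in>P. \<forall>q\<in>P. p \<noteq> q \<longrightarrow> set p \<inter> set q = {(A,B,C,d), (A',B,C,d)})"
proof -
  have A: "ternary r A" "ternary r A'" and B: "ternary s B" and C: "ternary t C" and "d < 3"
    using assms(4,5) by auto
  interpret e3c_crossing r s t A A'
    using A assms(6) by unfold_locales
  have "\<exists>P. card P = 2 * r + 2 \<and> internally_disjoint_paths r s t (A, B, C, d) (A', B, C, d) (r + 6) P"
  proof -
    consider "d = 0" | "d = 1" | "d = 2" using \<open>d < 3\<close> by linarith
    then show ?thesis
      by cases (use paths_in_layer0[OF B C] paths_in_layer1[OF B C] paths_in_layer2[OF B C]
          assms(1-3) in auto)
  qed
  then show ?thesis unfolding internally_disjoint_paths_def by simp
qed

end
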